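(* Let $h_1\subsetneq h_2^*$ be strongly separated half-spaces, let $\xi_1\in h_1$ and $\xi_2\in h_2$ be points of $\overline X$, and let $p\in B(h_1,h_2)$. Then $m(\xi_1,p,\xi_2)=p$.
   Context: $X$ is a finite-dimensional CAT(0) cube complex identified with its vertex set, $\mathfrak H$ its set of half-spaces, $h^*=X\setminus h$, $U_v=\{h:v\in h\}$; the Roller compactification $\overline X$ is the closure of $\{U_v\}$ in $2^{\mathfrak H}$, each $\xi\in\overline X$ a subset $U_\xi$, and a half-space $h$ is regarded as $\{\xi\in\overline X:h\in U_\xi\}$. The median $m(u,v,w)$ of $u,v,w\in\overline X$ is the point with $U_m=(U_u\cap U_v)\cup(U_v\cap U_w)\cup(U_w\cap U_u)$. Transverse ($\pitchfork$): all four intersections $h\cap k,h\cap k^*,h^*\cap k,h^*\cap k^*$ nonempty; strongly separated: no half-space transverse to both. Write $\hat a\subset b$ if $a\subsetneq b$ or $a^*\subsetneq b$. $\beta(h_1,h_2)$ is the set of $h$ with ($\hat h_1\subset h$, $h\pitchfork h_2$) or ($\hat h_2\subset h$, $h\pitchfork h_1$) or ($\hat h_1\subset h$, $\hat h_2\subset h$); $B(h_1,h_2)=\{x\in X:x\in h\ \forall h\in\beta(h_1,h_2)\}$. *)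

theory Defs
  imports Main
begin

text \<open>A CAT(0) cube complex is modelled by its 1-skeleton, a median graph
  (Chepoi/Roller).  Vertices form the type 'a; E is the adjacency relation.\<close>

definition walk :: "('a \<Rightarrow> 'a \<Rightarrow> bool) \<Rightarrow> 'a list \<Rightarrow> bool" where
  "walk E xs \<longleftrightarrow> xs \<noteq> [] \<and> (\<forall>i. Suc i < length xs \<longrightarrow> E (xs ! i) (xs ! Suc i))"

definition gdist :: "('a \<Rightarrow> 'a \<Rightarrow> bool) \<Rightarrow> 'a \<Rightarrow> 'a \<Rightarrow> nat" where
  "gdist E u v = (LEAST n. \<exists>xs. walk E xs \<and> hd xs = u \<and> last xs = v \<and> length xs = Suc n)"

definition interval :: "('a \<Rightarrow> 'a \<Rightarrow> bool) \<Rightarrow> 'a \<Rightarrow> 'a \<Rightarrow> 'a set" where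
  "interval E u v = {z. gdist E u z + gdist E z v = gdist E u v}"

definition median_graph :: "('a \<Rightarrow> 'a \<Rightarrow> bool) \<Rightarrow> bool" where
  "median_graph E \<longleftrightarrow>
     (\<forall>x y. E x y \<longrightarrow> E y x) \<and> (\<forall>x. \<not> E x x) \<and>
     (\<forall>u v. \<exists>xs. walk E xs \<and> hd xs = u \<and> last xs = v) \<and>
     (\<forall>x y z. \<exists>!m. m \<in> interval E x y \<inter> interval E y z \<inter> interval E x z)"

definition gconvex :: "('a \<Rightarrow> 'a \<Rightarrow> bool) \<Rightarrow> 'a set \<Rightarrow> bool" where
  "gconvex E S \<longleftrightarrow> (\<forall>x\<in>S. \<forall>y\<in>S. interval E x y \<subseteq> S)"

definition halfspaces :: "('a \<Rightarrow> 'a \<Rightarrow> bool) \<Rightarrow> 'a set set" where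
  "halfspaces E = {h. h \<noteq> {} \<and> h \<noteq> UNIV \<and> gconvex E h \<and> gconvex E (- h)}"

definition transverse :: "'a set \<Rightarrow> 'a set \<Rightarrow> bool" where
  "transverse h k \<longleftrightarrow> h \<inter> k \<noteq> {} \<and> h \<inter> - k \<noteq> {} \<and> - h \<inter> k \<noteq> {} \<and> - h \<inter> - k \<noteq> {}"

definition finite_dim :: "('a \<Rightarrow> 'a \<Rightarrow> bool) \<Rightarrow> bool" where
  "finite_dim E \<longleftrightarrow> (\<exists>D::nat. \<forall>F \<subseteq> halfspaces E.
      (\<forall>h\<in>F. \<forall>k\<in>F. h \<noteq> k \<longrightarrow> transverse h k) \<longrightarrow> finite F \<and> card F \<le> D)"

definition strongly_separated :: "('a \<Rightarrow> 'a \<Rightarrow> bool) \<Rightarrow> 'a set \<Rightarrow> 'a set \<Rightarrow> bool" where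
  "strongly_separated E h k \<longleftrightarrow> \<not> (\<exists>l\<in>halfspaces E. transverse l h \<and> transverse l k)"

definition Uv :: "('a \<Rightarrow> 'a \<Rightarrow> bool) \<Rightarrow> 'a \<Rightarrow> 'a set set" where
  "Uv E v = {h \<in> halfspaces E. v \<in> h}"

text \<open>Roller compactification: closure of {U_v} in the product topology on 2^H,
  i.e. every finite set of half-spaces sees U as some U_v.\<close>
definition roller :: "('a \<Rightarrow> 'a \<Rightarrow> bool) \<Rightarrow> 'a set set set" where
  "roller E = {U. U \<subseteq> halfspaces E \<and>
      (\<forall>F. finite F \<longrightarrow> F \<subseteq> halfspaces E \<longrightarrow> (\<exists>v. Uv E v \<inter> F = U \<inter> F))}"

definition median_pt :: "'b set \<Rightarrow> 'b set \<Rightarrow> 'b set \<Rightarrow> 'b set" where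
  "median_pt U V W = (U \<inter> V) \<union> (V \<inter> W) \<union> (W \<inter> U)"

definition hatsub :: "'a set \<Rightarrow> 'a set \<Rightarrow> bool" where
  "hatsub a b \<longleftrightarrow> a \<subset> b \<or> - a \<subset> b"

definition beta :: "('a \<Rightarrow> 'a \<Rightarrow> bool) \<Rightarrow> 'a set \<Rightarrow> 'a set \<Rightarrow> 'a set set" where
  "beta E h1 h2 = {h \<in> halfspaces E.
      (hatsub h1 h \<and> transverse h h2) \<or> (hatsub h2 h \<and> transverse h h1) \<or>
      (hatsub h1 h \<and> hatsub h2 h)}"

definition Bset :: "('a \<Rightarrow> 'a \<Rightarrow> bool) \<Rightarrow> 'a set \<Rightarrow> 'a set \<Rightarrow> 'a set" where
  "Bset E h1 h2 = {x. \<forall>h\<in>beta E h1 h2. x \<in> h}"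

end

theory Submission
  imports Defs
begin

text \<open>A half-space h in both \<xi>1 and \<xi>2 meets h1 and h2 (points of the Roller
  compactification are consistent choices of half-spaces) and is the complement of neither. Since h1, h2 are strongly
  separated, h is transverse to at most one of them, and nestedness with the other one forces
  h into \<beta>(h1, h2); hence p \<in> h. The median m(\<xi>1, p, \<xi>2) contains exactly the half-spaces
  lying in two of \<xi>1, U_p, \<xi>2, and by the above these are exactly those of U_p.\<close>

lemma halfspaces_Compl: "h \<in> halfspaces E \<Longrightarrow> - h \<in> halfspaces E"
  unfolding halfspaces_def by auto

lemma roller_subset_halfspaces: "U \<in> roller E \<Longrightarrow> U \<subseteq> halfspaces E"
  unfolding roller_def by auto

lemma roller_agrees_on_pair:
  assumes "U \<in> roller E" "a \<in> halfspaces E" "b \<in> halfspaces E"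
  obtains v where "Uv E v \<inter> {a, b} = U \<inter> {a, b}"
proof -
  have "\<forall>F. finite F \<longrightarrow> F \<subseteq> halfspaces E \<longrightarrow> (\<exists>v. Uv E v \<inter> F = U \<inter> F)"
    using assms(1) unfolding roller_def by simp
  then show thesis
    using assms(2,3) that by (meson empty_subsetI finite.emptyI finite_insert insert_subset)
qed

lemma roller_Int_nonempty:
  assumes "U \<in> roller E" "a \<in> U" "b \<in> U"
  shows "a \<inter> b \<noteq> {}"
proof -
  obtain v where "Uv E v \<inter> {a, b} = U \<inter> {a, b}"
    using roller_agrees_on_pair roller_subset_halfspaces assms by (metis subsetD)
  then have "v \<in> a" "v \<in> b" using assms unfolding Uv_def by blast+
  then show ?thesis by blast
qed

lemma roller_Compl_iff:
  assumes "U \<in> roller E" "h \<in> halfspaces E"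
  shows "- h \<in> U \<longleftrightarrow> h \<notin> U"
proof -
  obtain v where "Uv E v \<inter> {h, - h} = U \<inter> {h, - h}"
    using roller_agrees_on_pair[OF assms halfspaces_Compl[OF assms(2)]] .
  moreover have "- h \<in> Uv E v \<longleftrightarrow> h \<notin> Uv E v"
    unfolding Uv_def using assms(2) halfspaces_Compl by auto
  ultimately show ?thesis by blast
qed

lemma hatsub_if_not_transverse:
  assumes "h \<inter> k \<noteq> {}" "\<not> transverse h k" "\<not> h \<subseteq> k" "h \<noteq> - k"
  shows "hatsub k h"
  using assms unfolding transverse_def hatsub_def by blast

lemma beta_condition_if_meets_both:
  assumes "h1 \<inter> h2 = {}" "\<not> (transverse h h1 \<and> transverse h h2)"
    and "h \<inter> h1 \<noteq> {}" "h \<inter> h2 \<noteq> {}" "h \<noteq> - h1" "h \<noteq> - h2"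
  shows "(hatsub h1 h \<and> transverse h h2) \<or> (hatsub h2 h \<and> transverse h h1)
    \<or> (hatsub h1 h \<and> hatsub h2 h)"
proof -
  have "\<not> h \<subseteq> h1" "\<not> h \<subseteq> h2" using assms(1,3,4) by blast+
  then have "\<not> transverse h h1 \<longrightarrow> hatsub h1 h" "\<not> transverse h h2 \<longrightarrow> hatsub h2 h"
    using hatsub_if_not_transverse[OF assms(3)] hatsub_if_not_transverse[OF assms(4)] assms(5,6)
    by simp_all
  then show ?thesis using assms(2) by blast
qed

lemma common_halfspace_in_beta:
  assumes "h1 \<in> halfspaces E" "h2 \<in> halfspaces E"
    and "h1 \<inter> h2 = {}" "strongly_separated E h1 h2"
    and "\<xi>1 \<in> roller E" "\<xi>2 \<in> roller E" "h1 \<in> \<xi>1" "h2 \<in> \<xi>2"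
    and "h \<in> \<xi>1" "h \<in> \<xi>2"
  shows "h \<in> beta E h1 h2"
proof -
  have h: "h \<in> halfspaces E" using assms(5,9) roller_subset_halfspaces by blast
  have "\<not> (transverse h h1 \<and> transverse h h2)"
    using assms(4) h unfolding strongly_separated_def by blast
  moreover have "h \<inter> h1 \<noteq> {}" "h \<inter> h2 \<noteq> {}"
    using roller_Int_nonempty assms(5-10) by blast+
  moreover have "h \<noteq> - h1" "h \<noteq> - h2"
    using roller_Compl_iff assms(1,2,5-10) by blast+
  ultimately show ?thesis
    using beta_condition_if_meets_both[OF assms(3)] h unfolding beta_def by blast
qed

lemma median_pt_roller_eq_Uv:
  assumes "\<xi>1 \<in> roller E" "\<xi>2 \<in> roller E"
    and "\<And>h. h \<in> \<xi>1 \<Longrightarrow> h \<in> \<xi>2 \<Longrightarrow> p \<in> h"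
  shows "median_pt \<xi>1 (Uv E p) \<xi>2 = Uv E p"
proof (rule set_eqI)
  fix h
  show "h \<in> median_pt \<xi>1 (Uv E p) \<xi>2 \<longleftrightarrow> h \<in> Uv E p"
  proof (cases "h \<in> halfspaces E")
    case True
    then show ?thesis
      using assms roller_Compl_iff[OF assms(1) True] roller_Compl_iff[OF assms(2) True]
      unfolding median_pt_def Uv_def by blast
  next
    case False
    then show ?thesis
      using roller_subset_halfspaces[OF assms(1)] unfolding median_pt_def Uv_def by blast
  qed
qed

theorem lemma3:
  fixes E :: "'a \<Rightarrow> 'a \<Rightarrow> bool"
    and h1 h2 :: "'a set" and \<xi>1 \<xi>2 :: "'a set set" and p :: 'a
  assumes "median_graph E" and "finite_dim E"
    and "h1 \<in> halfspaces E" and "h2 \<in> halfspaces E"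
    and "h1 \<subset> - h2" and "strongly_separated E h1 h2"
    and "\<xi>1 \<in> roller E" and "\<xi>2 \<in> roller E"
    and "h1 \<in> \<xi>1" and "h2 \<in> \<xi>2"
    and "p \<in> Bset E h1 h2"
  shows "median_pt \<xi>1 (Uv E p) \<xi>2 = Uv E p"
proof (rule median_pt_roller_eq_Uv[OF assms(7,8)])
  fix h assume "h \<in> \<xi>1" "h \<in> \<xi>2"
  moreover have "h1 \<inter> h2 = {}" using assms(5) by blast
  ultimately have "h \<in> beta E h1 h2"
    using common_halfspace_in_beta[OF assms(3,4) _ assms(6-10)] by blast
  then show "p \<in> h" using assms(11) unfolding Bset_def by blast
qed

end
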